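(* Let $|p|<1$ and let $a,b,q,r$ be nonzero complex numbers such that all expressions below are well defined. Then for every $n=0,1,2,\ldots$, $$\theta(a/r,\,b/r;p)\sum_{k=0}^n\frac{(aq^k,\,bq^{-k};r,p)_{n-1}\,\theta(aq^{2k}/b;p)}{(q;q,p)_k\,(q;q,p)_{n-k}\,(aq^k/b;q,p)_{n+1}}(-1)^kq^{\binom k2}=\delta_{n,0}.$$
   Context: For $|p|<1$ and $x\neq 0$, $\theta(x;p)=(x;p)_\infty(p/x;p)_\infty$ where $(x;p)_\infty=\prod_{k\ge 0}(1-xp^k)$, and $\theta(x_1,\dots,x_m;p)=\prod_{i=1}^m\theta(x_i;p)$. For $a\ne0$ and an integer $n$: $(a;q,p)_n=\prod_{k=0}^{n-1}\theta(aq^k;p)$ for $n\ge1$, $(a;q,p)_0=1$, $(a;q,p)_n=1/\prod_{k=0}^{-n-1}\theta(aq^{n+k};p)$ for $n\le-1$ (so $(a;r,p)_{-1}=1/\theta(a/r;p)$); $(a_1,\dots,a_m;q,p)_n=\prod_i(a_i;q,p)_n$. $\delta_{n,0}$ is the Kronecker delta. *)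

theory Defs
  imports "HOL-Analysis.Analysis"
begin

definition qinf :: "complex \<Rightarrow> complex \<Rightarrow> complex" where
  "qinf x p = (\<Prod>k. (1 - x * p ^ k))"

definition etheta :: "complex \<Rightarrow> complex \<Rightarrow> complex" where
  "etheta x p = qinf x p * qinf (p / x) p"

definition epoch :: "complex \<Rightarrow> complex \<Rightarrow> complex \<Rightarrow> int \<Rightarrow> complex" where
  "epoch a q p n =
     (if n \<ge> 0 then (\<Prod>k<nat n. etheta (a * q ^ k) p)
      else 1 / (\<Prod>k<nat (- n). etheta (a * q powi (n + int k)) p))"

end

theory Submission
  imports Defs "HOL-Complex_Analysis.Complex_Analysis"
begin

text \<open>
  Write \<open>\<phi>(x,y) = \<theta>(xy;p) \<theta>(x/y;p) / x\<close>. It is antisymmetric in \<open>x, y\<close>, invariant under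
  \<open>x \<mapsto> 1/x\<close>, and \<open>\<phi>(px,y) = \<phi>(x,y) / (p x\<^sup>2)\<close>. Hence the quotient of two such functions of
  \<open>x\<close> is \<open>p\<close>-periodic on \<open>\<complex> - {0}\<close>, and if it has no poles it is constant by Liouville's
  theorem. Applied to the difference of the two sides of Weierstrass' addition formula
  \<open>\<phi>(x,y) \<phi>(u,v) - \<phi>(x,v) \<phi>(u,y) = \<phi>(x,u) \<phi>(y,v)\<close>, divided by \<open>\<phi>(x,u)\<close>, this proves the
  formula. By induction on \<open>N\<close>, the addition formula yields the elliptic partial fraction identity
  \<open>\<Sum>k\<in>I. (\<Prod>j<N. \<phi>(x\<^sub>k,c\<^sub>j)) / (\<Prod>m\<in>I-{k}. \<phi>(x\<^sub>k,x\<^sub>m)) = 0\<close> for \<open>|I| = N + 2\<close>.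
  For \<open>n \<ge> 1\<close> take \<open>I = {0..n}\<close>, \<open>x\<^sub>k = s q\<^sup>k\<close> and \<open>c\<^sub>j = a r\<^sup>j / s\<close> with \<open>s\<^sup>2 = a/b\<close>: the
  \<open>k\<close>-th term of the identity is then a multiple, independent of \<open>k\<close>, of the \<open>k\<close>-th summand of the
  theorem.
\<close>

section \<open>Theta functions\<close>

lemma qinf_convergent_prod:
  fixes x p :: complex
  assumes "norm p < 1"
  shows "convergent_prod (\<lambda>k. 1 - x * p ^ k)"
proof (intro abs_convergent_prod_imp_convergent_prod summable_imp_abs_convergent_prod)
  show "summable (\<lambda>k. norm (1 - x * p ^ k - 1))"
    using assms by (simp add: norm_mult norm_power summable_mult summable_geometric)
qed

lemma qinf_has_prod:
  fixes x p :: complex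
  assumes "norm p < 1"
  shows "(\<lambda>k. 1 - x * p ^ k) has_prod qinf x p"
  using qinf_convergent_prod[OF assms] unfolding qinf_def convergent_prod_has_prod_iff .

lemma qinf_rec:
  fixes x p :: complex
  assumes "norm p < 1"
  shows "qinf x p = (1 - x) * qinf (p * x) p"
proof -
  have "(\<lambda>k. 1 - x * p ^ k) has_prod ((\<Prod>k<1. 1 - x * p ^ k) * (\<Prod>k. 1 - x * p ^ (k + 1)))"
    by (rule has_prod_ignore_initial_segment'[OF qinf_convergent_prod[OF assms]])
  moreover have "(\<Prod>k. 1 - x * p ^ (k + 1)) = qinf (p * x) p"
    unfolding qinf_def by (rule prodinf_cong) (simp add: algebra_simps)
  ultimately have "(\<lambda>k. 1 - x * p ^ k) has_prod ((1 - x) * qinf (p * x) p)"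
    by simp
  then have "(1 - x) * qinf (p * x) p = (\<Prod>k. 1 - x * p ^ k)"
    by (rule has_prod_unique)
  then show ?thesis
    by (simp add: qinf_def)
qed

lemma qinf_0_left: "qinf 0 p = 1"
  by (simp add: qinf_def)

lemma qinf_nome_0: "qinf x 0 = 1 - x"
  using qinf_rec[of 0 x] by (simp add: qinf_0_left)

lemma qinf_eq_0_iff:
  fixes x p :: complex
  assumes "norm p < 1"
  shows "qinf x p = 0 \<longleftrightarrow> (\<exists>k. x * p ^ k = 1)"
proof -
  have "qinf x p = 0 \<longleftrightarrow> 0 \<in> range (\<lambda>k. 1 - x * p ^ k)"
    by (rule has_prod_eq_0_iff[OF qinf_has_prod[OF assms]])
  then show ?thesis
    by (auto simp: image_iff)
qed

lemma qinf_nonzero: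
  fixes x p :: complex
  assumes "norm p < 1" "norm x \<le> 1" "x \<noteq> 1"
  shows "qinf x p \<noteq> 0"
proof
  assume "qinf x p = 0"
  then obtain k where k: "x * p ^ k = 1"
    using qinf_eq_0_iff[OF assms(1)] by blast
  with assms(3) have "k > 0"
    by (cases k) auto
  with assms(1) have "norm p ^ k < 1"
    by (simp add: power_less_one_iff)
  moreover have "norm x * norm p ^ k \<le> norm p ^ k"
    using assms(2) by (simp add: mult_left_le_one_le)
  ultimately have "norm (x * p ^ k) < 1"
    by (simp add: norm_mult norm_power)
  with k show False
    by simp
qed

lemma qinf_uniform_limit:
  fixes p :: complex
  assumes "norm p < 1"
  shows "uniform_limit (cball 0 R) (\<lambda>N x. \<Prod>k<N. 1 - x * p ^ k) (\<lambda>x. qinf x p) sequentially"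
proof -
  have "uniformly_convergent_on (cball 0 R) (\<lambda>N x. \<Prod>k<N. 1 - x * p ^ k)"
  proof (rule uniformly_convergent_on_prod')
    show "uniformly_convergent_on (cball 0 R) (\<lambda>N x. \<Sum>k<N. norm (1 - x * p ^ k - 1))"
    proof (rule Weierstrass_m_test')
      fix k and x :: complex
      assume "x \<in> cball 0 R"
      then show "norm (norm (1 - x * p ^ k - 1)) \<le> R * norm p ^ k"
        by (simp add: norm_mult norm_power mult_right_mono)
    next
      show "summable (\<lambda>k. R * norm p ^ k)"
        using assms by (simp add: summable_mult summable_geometric)
    qed
  qed (auto intro!: continuous_intros)
  then obtain g where g: "uniform_limit (cball 0 R) (\<lambda>N x. \<Prod>k<N. 1 - x * p ^ k) g sequentially"
    by (auto simp: uniformly_convergent_on_def)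
  have g_eq: "g x = qinf x p" if "x \<in> cball 0 R" for x
  proof (rule LIMSEQ_unique)
    show "(\<lambda>N. \<Prod>k<N. 1 - x * p ^ k) \<longlonglongrightarrow> g x"
      using tendsto_uniform_limitI[OF g that] .
    show "(\<lambda>N. \<Prod>k<N. 1 - x * p ^ k) \<longlonglongrightarrow> qinf x p"
      by (rule has_prod_imp_tendsto'[OF qinf_has_prod[OF assms]])
  qed
  show ?thesis
    using g by (subst (asm) uniform_limit_cong'[OF refl g_eq])
qed

lemma holomorphic_qinf:
  fixes p :: complex
  assumes "norm p < 1"
  shows "(\<lambda>x. qinf x p) holomorphic_on A"
proof (rule holomorphic_on_subset)
  show "(\<lambda>x. qinf x p) holomorphic_on UNIV"
  proof (rule holomorphic_uniform_sequence[where f = "\<lambda>N x. \<Prod>k<N. 1 - x * p ^ k"])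
    fix z :: complex
    have "uniform_limit (cball z 1) (\<lambda>N x. \<Prod>k<N. 1 - x * p ^ k) (\<lambda>x. qinf x p) sequentially"
      by (rule uniform_limit_on_subset[OF qinf_uniform_limit[OF assms, of "norm z + 1"]])
         (simp add: cball_subset_cball_iff)
    then show "\<exists>d>0. cball z d \<subseteq> UNIV \<and>
        uniform_limit (cball z d) (\<lambda>N x. \<Prod>k<N. 1 - x * p ^ k) (\<lambda>x. qinf x p) sequentially"
      by (intro exI[of _ 1]) auto
  qed (auto intro!: holomorphic_intros)
qed auto

lemma holomorphic_on_qinf [holomorphic_intros]:
  "norm (p::complex) < 1 \<Longrightarrow> f holomorphic_on A \<Longrightarrow> (\<lambda>x. qinf (f x) p) holomorphic_on A"
  using holomorphic_on_compose[of f A "\<lambda>x. qinf x p"] holomorphic_qinf by (auto simp: o_def)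

lemma etheta_rec:
  fixes x p :: complex
  assumes "norm p < 1"
  shows "etheta x p = (1 - x) * qinf (p * x) p * qinf (p / x) p"
  unfolding etheta_def using qinf_rec[OF assms, of x] by simp

lemma etheta_1: "norm (p::complex) < 1 \<Longrightarrow> etheta 1 p = 0"
  by (simp add: etheta_rec)

lemma etheta_nome_0: "etheta x 0 = 1 - x"
  by (simp add: etheta_def qinf_nome_0)

lemma etheta_inverse:
  fixes x p :: complex
  assumes "norm p < 1" "x \<noteq> 0"
  shows "etheta (1 / x) p = - etheta x p / x"
proof -
  have "etheta (1 / x) p = (1 - 1 / x) * qinf (p / x) p * qinf (p * x) p"
    using etheta_rec[OF assms(1), of "1 / x"] by simp
  also have "\<dots> = - etheta x p / x"
    using assms(2) by (simp add: etheta_rec[OF assms(1)] field_simps)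
  finally show ?thesis .
qed

lemma etheta_mult_p:
  fixes x p :: complex
  assumes "norm p < 1" "p \<noteq> 0" "x \<noteq> 0"
  shows "etheta (p * x) p = - etheta x p / x"
proof -
  have "etheta (p * x) p = qinf (p * x) p * ((1 - 1 / x) * qinf (p / x) p)"
    using assms(2) qinf_rec[OF assms(1), of "1 / x"] by (simp add: etheta_def)
  also have "\<dots> = - etheta x p / x"
    using assms(3) by (simp add: etheta_rec[OF assms(1)] field_simps)
  finally show ?thesis .
qed

lemma etheta_eq_0D:
  fixes x p :: complex
  assumes "norm p < 1" "etheta x p = 0"
  shows "(\<exists>k. x * p ^ k = 1) \<or> (\<exists>k. x = p ^ Suc k)"
proof -
  from assms(2) have "qinf x p = 0 \<or> qinf (p / x) p = 0"
    by (simp add: etheta_def)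
  then show ?thesis
  proof
    assume "qinf (p / x) p = 0"
    then obtain k where "p / x * p ^ k = 1"
      using qinf_eq_0_iff[OF assms(1)] by blast
    then have "x = p ^ Suc k"
      by (cases "x = 0") (simp_all add: field_simps)
    then show ?thesis
      by blast
  qed (simp add: qinf_eq_0_iff[OF assms(1)])
qed

lemma etheta_minus_1_nonzero:
  fixes p :: complex
  assumes "norm p < 1"
  shows "etheta (- 1) p \<noteq> 0"
proof -
  have "- p \<noteq> 1"
    using assms by (metis norm_minus_cancel norm_one order.irrefl)
  then show ?thesis
    using assms by (simp add: etheta_def qinf_nonzero)
qed

lemma holomorphic_on_etheta [holomorphic_intros]:
  fixes p :: complex
  assumes "norm p < 1" "f holomorphic_on A" "\<And>x. x \<in> A \<Longrightarrow> f x \<noteq> 0"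
  shows "(\<lambda>x. etheta (f x) p) holomorphic_on A"
  unfolding etheta_def using assms by (intro holomorphic_intros) auto

text \<open>\<open>\<theta>(x y\<^sup>\<plusminus>\<^sup>1;p) / x\<close>; the factor \<open>1/x\<close> makes it antisymmetric in \<open>x\<close> and \<open>y\<close>.\<close>
definition etheta_pm :: "complex \<Rightarrow> complex \<Rightarrow> complex \<Rightarrow> complex" where
  "etheta_pm x y p = etheta (x * y) p * etheta (x / y) p / x"

lemma etheta_pm_swap:
  fixes x y p :: complex
  assumes "norm p < 1" "x \<noteq> 0" "y \<noteq> 0"
  shows "etheta_pm y x p = - etheta_pm x y p"
proof -
  have "etheta (y / x) p = - etheta (x / y) p / (x / y)"
    using etheta_inverse[OF assms(1), of "x / y"] assms(2,3) by simp
  then show ?thesis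
    using assms(2,3) by (simp add: etheta_pm_def mult.commute)
qed

lemma etheta_pm_self: "norm (p::complex) < 1 \<Longrightarrow> etheta_pm x x p = 0"
  by (cases "x = 0") (simp_all add: etheta_pm_def etheta_1)

lemma etheta_pm_inverse:
  fixes x y p :: complex
  assumes "norm p < 1" "x \<noteq> 0" "y \<noteq> 0"
  shows "etheta_pm (1 / x) y p = etheta_pm x y p"
proof -
  have "etheta (1 / x * y) p = - etheta (x / y) p / (x / y)"
    using etheta_inverse[OF assms(1), of "x / y"] assms(2,3) by simp
  moreover have "etheta (1 / x / y) p = - etheta (x * y) p / (x * y)"
    using etheta_inverse[OF assms(1), of "x * y"] assms(2,3) by simp
  ultimately show ?thesis
    using assms(2,3) by (simp only: etheta_pm_def) (simp add: field_simps)
qed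

lemma etheta_pm_mult_p:
  fixes x y p :: complex
  assumes "norm p < 1" "p \<noteq> 0" "x \<noteq> 0" "y \<noteq> 0"
  shows "etheta_pm (p * x) y p = etheta_pm x y p / (p * x ^ 2)"
proof -
  have "etheta (p * x * y) p = - etheta (x * y) p / (x * y)"
    using etheta_mult_p[OF assms(1,2), of "x * y"] assms(3,4) by (simp add: mult.assoc)
  moreover have "etheta (p * x / y) p = - etheta (x / y) p / (x / y)"
    using etheta_mult_p[OF assms(1,2), of "x / y"] assms(3,4) by (simp add: mult.assoc)
  ultimately show ?thesis
    using assms(2-4) by (simp only: etheta_pm_def) (simp add: field_simps power2_eq_square)
qed

lemma etheta_pm_nome_0: "etheta_pm x y 0 = (1 - x * y) * (1 - x / y) / x"
  by (simp add: etheta_pm_def etheta_nome_0)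

lemma holomorphic_on_etheta_pm [holomorphic_intros]:
  fixes p :: complex
  assumes "norm p < 1" "f holomorphic_on A" "g holomorphic_on A"
    and "\<And>x. x \<in> A \<Longrightarrow> f x \<noteq> 0 \<and> g x \<noteq> 0"
  shows "(\<lambda>x. etheta_pm (f x) (g x) p) holomorphic_on A"
  unfolding etheta_pm_def using assms by (intro holomorphic_intros) auto

section \<open>Multiplicatively periodic functions\<close>

lemma power_bracket:
  fixes c t :: real
  assumes "0 < c" "c < 1" "0 < t" "t \<le> 1"
  shows "\<exists>n. c ^ Suc n < t \<and> t \<le> c ^ n"
proof -
  have ex: "\<exists>N. c ^ N < t"
    using real_arch_pow_inv[OF assms(3,2)] by blast
  define M where "M = (LEAST N. c ^ N < t)"
  have M: "c ^ M < t"
    unfolding M_def using ex by (rule LeastI_ex)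
  then obtain n where n: "M = Suc n"
    using assms(4) by (cases M) auto
  have "\<not> c ^ n < t"
    using not_less_Least[of n "\<lambda>N. c ^ N < t"] n unfolding M_def by auto
  then show ?thesis
    using M n by auto
qed

lemma mult_periodic_bounded:
  fixes f :: "complex \<Rightarrow> complex" and p :: complex
  assumes p: "norm p < 1" "p \<noteq> 0"
    and f: "continuous_on (- {0}) f" "\<And>z. z \<noteq> 0 \<Longrightarrow> f (p * z) = f z"
  shows "\<exists>B. \<forall>z. z \<noteq> 0 \<longrightarrow> norm (f z) \<le> B"
proof -
  define K where "K = {z :: complex. norm p \<le> norm z \<and> norm z \<le> 1}"
  have "closed K"
    unfolding K_def by (intro closed_Collect_conj closed_Collect_le continuous_intros)
  moreover have "bounded K"
    unfolding K_def by (rule bounded_subset[of "cball 0 1"]) auto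
  ultimately have "compact K"
    by (simp add: compact_eq_bounded_closed)
  moreover have "K \<subseteq> - {0}"
    unfolding K_def using p by auto
  ultimately have "compact (f ` K)"
    using f(1) by (intro compact_continuous_image) (auto intro: continuous_on_subset)
  then obtain B where B: "\<And>z. z \<in> K \<Longrightarrow> norm (f z) \<le> B"
    using compact_imp_bounded bounded_iff by (metis imageI)
  have f_power: "f (p ^ n * z) = f z" if "z \<noteq> 0" for n z
    using that p(2) by (induction n) (simp_all add: f(2) mult.assoc)
  have "norm (f z) \<le> B" if z: "z \<noteq> 0" for z
  proof (cases "norm z \<le> 1")
    case True
    then obtain n where n: "norm p ^ Suc n < norm z" "norm z \<le> norm p ^ n"
      using power_bracket[of "norm p" "norm z"] z p by auto
    have "z / p ^ n \<in> K"
      unfolding K_def using n p by (auto simp: norm_divide norm_power field_simps)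
    then show ?thesis
      using B f_power[of "z / p ^ n" n] z p(2) by simp
  next
    case False
    then obtain n where n: "norm p ^ Suc n < inverse (norm z)" "inverse (norm z) \<le> norm p ^ n"
      using power_bracket[of "norm p" "inverse (norm z)"] p z by (auto simp: inverse_le_1_iff)
    have "p ^ Suc n * z \<in> K"
      unfolding K_def using n p z False by (auto simp: norm_mult norm_power field_simps)
    then show ?thesis
      using B f_power[OF z, of "Suc n"] by metis
  qed
  then show ?thesis
    by blast
qed

lemma mult_periodic_holomorphic_eq:
  fixes f :: "complex \<Rightarrow> complex" and p :: complex
  assumes p: "norm p < 1" "p \<noteq> 0"
    and f: "f holomorphic_on - {0}" "\<And>z. z \<noteq> 0 \<Longrightarrow> f (p * z) = f z"
    and "x \<noteq> 0" "y \<noteq> 0"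
  shows "f x = f y"
proof -
  obtain B where B: "\<And>z. z \<noteq> 0 \<Longrightarrow> norm (f z) \<le> B"
    using mult_periodic_bounded[OF p holomorphic_on_imp_continuous_on[OF f(1)] f(2)] by blast
  have "\<exists>g. g holomorphic_on UNIV \<and> (\<forall>z \<in> UNIV - {0}. g z = f z)"
  proof (subst holomorphic_on_extend_bounded)
    show "f holomorphic_on UNIV - {0}"
      using f(1) by (simp add: Compl_eq_Diff_UNIV)
    show "\<exists>B. \<forall>\<^sub>F z in at 0. norm (f z) \<le> B"
      using B by (intro exI[of _ B]) (auto simp: eventually_at_filter intro!: always_eventually)
  qed auto
  then obtain g where g: "g holomorphic_on UNIV" "\<And>z. z \<noteq> 0 \<Longrightarrow> g z = f z"
    by auto
  have "norm (g z) \<le> max B (norm (g 0))" for z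
    using B[of z] g(2)[of z] by (cases "z = 0") auto
  then have "bounded (range g)"
    by (auto simp: bounded_iff)
  then have "g constant_on UNIV"
    by (rule Liouville_theorem[OF g(1)])
  then show ?thesis
    using g(2) assms(5,6) by (metis constant_on_def UNIV_I)
qed

lemma tendsto_at_if_invariant:
  assumes "(f \<longlongrightarrow> L) (at w)" "(g \<longlongrightarrow> w) (at w')" "eventually (\<lambda>z. g z \<noteq> w) (at w')"
    and "\<And>z. f (g z) = f z"
  shows "(f \<longlongrightarrow> L) (at w')"
  using filterlim_compose[OF assms(1) filterlim_atI[OF assms(2,3)]] by (simp add: assms(4))

lemma tendsto_at_if_mult_invariant:
  fixes f :: "complex \<Rightarrow> complex" and p :: complex
  assumes "p \<noteq> 0" "\<And>z. f (p * z) = f z" "(f \<longlongrightarrow> L) (at w)"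
  shows "(f \<longlongrightarrow> L) (at (w * p ^ n))" "(f \<longlongrightarrow> L) (at (w / p ^ n))"
proof -
  have mult: "(f \<longlongrightarrow> L) (at (v * p))" and div: "(f \<longlongrightarrow> L) (at (v / p))"
    if "(f \<longlongrightarrow> L) (at v)" for v
  proof -
    have "f (z / p) = f z" for z
      using assms(1) assms(2)[of "z / p"] by simp
    then show "(f \<longlongrightarrow> L) (at (v * p))"
      using assms(1) by (intro tendsto_at_if_invariant[OF that, of "\<lambda>z. z / p"])
        (auto intro!: tendsto_eq_intros simp: eventually_at_filter field_simps)
    show "(f \<longlongrightarrow> L) (at (v / p))"
      using assms(1,2) by (intro tendsto_at_if_invariant[OF that, of "\<lambda>z. p * z"])
        (auto intro!: tendsto_eq_intros simp: eventually_at_filter field_simps)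
  qed
  show "(f \<longlongrightarrow> L) (at (w * p ^ n))"
  proof (induction n)
    case (Suc n)
    then show ?case
      using mult[OF Suc.IH] by (simp add: ac_simps)
  qed (simp add: assms(3))
  show "(f \<longlongrightarrow> L) (at (w / p ^ n))"
  proof (induction n)
    case (Suc n)
    then show ?case
      using div[OF Suc.IH] by (simp add: ac_simps)
  qed (simp add: assms(3))
qed

lemma tendsto_at_if_inverse_invariant:
  fixes f :: "complex \<Rightarrow> complex"
  assumes "\<And>z. f (1 / z) = f z" "(f \<longlongrightarrow> L) (at w)" "w \<noteq> 0"
  shows "(f \<longlongrightarrow> L) (at (1 / w))"
proof (rule tendsto_at_if_invariant[OF assms(2), of "\<lambda>z. 1 / z"])
  show "((\<lambda>z. 1 / z) \<longlongrightarrow> w) (at (1 / w))"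
    using assms(3) by (auto intro!: tendsto_eq_intros)
  have "1 / z \<noteq> w" if "z \<noteq> 1 / w" for z
    using that assms(3) by (auto simp: field_simps)
  then show "\<forall>\<^sub>F z in at (1 / w). 1 / z \<noteq> w"
    by (auto simp: eventually_at_filter intro!: always_eventually)
qed (rule assms(1))

lemma tendsto_quotient_at_simple_zero:
  fixes f e :: "complex \<Rightarrow> complex"
  assumes "(f has_field_derivative f') (at z)" "f z = 0" "isCont e z" "e z \<noteq> 0"
  shows "((\<lambda>x. f x / ((x - z) * e x)) \<longlongrightarrow> f' / e z) (at z)"
proof (rule Lim_transform_eventually)
  show "((\<lambda>x. (f x - f z) / (x - z) / e x) \<longlongrightarrow> f' / e z) (at z)"
    using assms by (intro tendsto_divide has_field_derivativeD) (auto simp: isCont_def)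
  show "\<forall>\<^sub>F x in at z. (f x - f z) / (x - z) / e x = f x / ((x - z) * e x)"
    using assms(2) by (simp add: eventually_at_filter)
qed

lemma remove_sings_holomorphic_on:
  assumes "f meromorphic_on A" "open A" "\<And>z. z \<in> A \<Longrightarrow> \<exists>L. (f \<longlongrightarrow> L) (at z)"
  shows "remove_sings f holomorphic_on A"
proof -
  have "remove_sings f analytic_on {z}" if z: "z \<in> A" for z
  proof -
    have "isolated_singularity_at f z"
      using z meromorphic_on_subset[OF assms(1), of "{z}"]
      by (auto intro: meromorphic_on_isolated_singularity)
    moreover obtain L where "(f \<longlongrightarrow> L) (at z)"
      using assms(3)[OF z] by blast
    ultimately show ?thesis
      by (rule remove_sings_analytic_at)
  qed
  then show ?thesis
    by (auto intro: analytic_imp_holomorphic analytic_on_analytic_at[THEN iffD2])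
qed

lemma remove_sings_mult_invariant:
  fixes f :: "complex \<Rightarrow> complex" and p :: complex
  assumes "p \<noteq> 0" "\<And>z. f (p * z) = f z" "(f \<longlongrightarrow> L) (at z)"
  shows "remove_sings f (p * z) = remove_sings f z"
  using tendsto_at_if_mult_invariant(1)[OF assms, of 1] assms(3)
  by (simp add: remove_sings_eqI mult.commute)

lemma mult_periodic_quotient_eq_0:
  fixes G D :: "complex \<Rightarrow> complex" and p :: complex
  assumes p: "norm p < 1" "p \<noteq> 0"
    and holo: "G holomorphic_on - {0}" "D holomorphic_on - {0}"
    and periodic: "\<And>z. G (p * z) / D (p * z) = G z / D z"
    and lim: "\<And>z. z \<noteq> 0 \<Longrightarrow> \<exists>L. ((\<lambda>z. G z / D z) \<longlongrightarrow> L) (at z)"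
    and y: "y \<noteq> 0" "D y \<noteq> 0" "G y = 0"
    and x: "x \<noteq> 0"
  shows "G x = 0"
proof -
  define H where "H = (\<lambda>z. G z / D z)"
  define S where "S = - {0} \<inter> D -` (- {0})"
  have opn: "open (- {0 :: complex})"
    by auto
  have "open S"
    unfolding S_def using holomorphic_on_imp_continuous_on[OF holo(2)]
    by (intro continuous_open_preimage) auto
  have "H holomorphic_on S"
    unfolding H_def S_def
    by (intro holomorphic_intros holomorphic_on_subset[OF holo(1)] holomorphic_on_subset[OF holo(2)]) auto
  then have on_S: "remove_sings H z = H z" if "z \<in> S" for z
    using \<open>open S\<close> that by (simp add: holomorphic_on_imp_analytic_at)
  have "G analytic_on - {0}" "D analytic_on - {0}"
    using holo opn by (simp_all add: analytic_on_open)
  then have "H meromorphic_on - {0}"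
    unfolding H_def by (intro meromorphic_on_divide analytic_on_imp_meromorphic_on)
  then have "remove_sings H holomorphic_on - {0}"
    using opn lim by (intro remove_sings_holomorphic_on) (auto simp: H_def)
  moreover have "remove_sings H (p * z) = remove_sings H z" if "z \<noteq> 0" for z
    using lim[OF that] periodic p(2) by (auto simp: H_def intro: remove_sings_mult_invariant)
  ultimately have periodic_const: "remove_sings H z = remove_sings H y" if "z \<noteq> 0" for z
    using mult_periodic_holomorphic_eq[OF p] that y(1) by blast
  have "y \<in> S"
    unfolding S_def using y by auto
  have "G z = 0" if "z \<in> S" for z
    using on_S[OF that] on_S[OF \<open>y \<in> S\<close>] periodic_const[of z] that y by (auto simp: H_def S_def)
  moreover have "S \<noteq> {}" "S \<subseteq> - {0}" "connected (- {0 :: complex})"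
    using \<open>y \<in> S\<close> by (auto simp: S_def intro: connected_punctured_universe)
  ultimately have "G x = (\<lambda>_. 0) x"
    using analytic_continuation_open[OF \<open>open S\<close> opn _ _ _ holo(1) holomorphic_on_const] x
    by blast
  then show ?thesis
    by simp
qed

section \<open>The addition formula\<close>

lemma etheta_mult_eq_0D:
  fixes z w p :: complex
  assumes "norm p < 1" "etheta (z * w) p = 0" "w \<noteq> 0"
  shows "\<exists>k. z = 1 / w / p ^ k \<or> z = 1 / w * p ^ k"
proof -
  consider k where "z * w * p ^ k = 1" | k where "z * w = p ^ Suc k"
    using etheta_eq_0D[OF assms(1,2)] by blast
  then show ?thesis
  proof cases
    case 1
    then have "inverse (w * p ^ k) = z"
      by (intro inverse_unique) (simp add: ac_simps)
    then show ?thesis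
      by (auto simp: divide_inverse)
  next
    case 2
    then have "z = 1 / w * p ^ Suc k"
      using assms(3) by (simp add: field_simps)
    then show ?thesis
      by blast
  qed
qed

lemma etheta_pm_eq_0D:
  fixes z u p :: complex
  assumes "norm p < 1" "etheta_pm z u p = 0" "z \<noteq> 0" "u \<noteq> 0"
  shows "\<exists>w\<in>{u, 1 / u}. \<exists>k. z = w * p ^ k \<or> z = w / p ^ k"
proof -
  from assms(2,3) have "etheta (z * u) p = 0 \<or> etheta (z * (1 / u)) p = 0"
    by (simp add: etheta_pm_def)
  then show ?thesis
    using etheta_mult_eq_0D[OF assms(1), of z u] etheta_mult_eq_0D[OF assms(1), of z "1 / u"] assms(4)
    by auto
qed

lemma etheta_pm_simple_zero:
  fixes u p :: complex
  assumes "norm p < 1" "u \<noteq> 0" "etheta (u * u) p \<noteq> 0"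
  obtains E where "isCont E u" "E u \<noteq> 0" "\<And>z. z \<noteq> 0 \<Longrightarrow> etheta_pm z u p = (z - u) * E z"
proof
  define E where "E z = - etheta (z * u) p * qinf (p * (z / u)) p * qinf (p / (z / u)) p / (u * z)"
    for z
  show "etheta_pm z u p = (z - u) * E z" if "z \<noteq> 0" for z
    using that assms(2) by (simp add: etheta_pm_def E_def etheta_rec[OF assms(1), of "z / u"] field_simps)
  have "E holomorphic_on - {0}"
    unfolding E_def using assms(1,2) by (intro holomorphic_intros) auto
  then show "isCont E u"
    using assms(2) by (intro analytic_at_imp_isCont holomorphic_on_imp_analytic_at) auto
  have "norm p \<le> 1" "p \<noteq> 1"
    using assms(1) by auto
  then show "E u \<noteq> 0"
    using assms by (simp add: E_def qinf_nonzero)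
qed

lemma tendsto_etheta_pm_quotient:
  fixes G H :: "complex \<Rightarrow> complex" and u p :: complex
  assumes p: "norm p < 1" "p \<noteq> 0" and u: "u \<noteq> 0" "etheta (u * u) p \<noteq> 0"
    and G: "G holomorphic_on - {0}" "G u = 0"
    and H: "\<And>z. H z = G z / etheta_pm z u p" "\<And>z. H (p * z) = H z" "\<And>z. H (1 / z) = H z"
    and "z \<noteq> 0"
  shows "\<exists>L. (H \<longlongrightarrow> L) (at z)"
proof -
  have opn: "open (- {0 :: complex})"
    by auto
  obtain L where L: "(H \<longlongrightarrow> L) (at u)"
  proof -
    obtain E where E: "isCont E u" "E u \<noteq> 0" "\<And>z. z \<noteq> 0 \<Longrightarrow> etheta_pm z u p = (z - u) * E z"
      using etheta_pm_simple_zero[OF p(1) u] by blast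
    obtain G' where "(G has_field_derivative G') (at u)"
      using G(1) opn u(1) by (auto simp: holomorphic_on_open)
    then have "((\<lambda>z. G z / ((z - u) * E z)) \<longlongrightarrow> G' / E u) (at u)"
      using G(2) E(1,2) by (rule tendsto_quotient_at_simple_zero)
    moreover have "\<forall>\<^sub>F z in at u. z \<in> - {0} - {u}"
      using opn u(1) by (intro eventually_at_in_open) auto
    then have "\<forall>\<^sub>F z in at u. G z / ((z - u) * E z) = H z"
      by eventually_elim (simp add: E(3) H(1))
    ultimately show ?thesis
      using that Lim_transform_eventually by blast
  qed
  (* Every zero of \<open>\<phi>(\<cdot>,u)\<close> lies in the orbit of \<open>u\<close> or \<open>1/u\<close>, where \<open>H\<close> has the same limit by invariance. *)
  show ?thesis
  proof (cases "etheta_pm z u p = 0")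
    case True
    then obtain w k where w: "w \<in> {u, 1 / u}" "z = w * p ^ k \<or> z = w / p ^ k"
      using etheta_pm_eq_0D[OF p(1) _ \<open>z \<noteq> 0\<close> u(1)] by blast
    have "(H \<longlongrightarrow> L) (at w)"
      using w(1) L tendsto_at_if_inverse_invariant[of H, OF H(3) L u(1)] by auto
    then show ?thesis
      using w(2) tendsto_at_if_mult_invariant[of p H, OF p(2) H(2)] by blast
  next
    case False
    have "(\<lambda>z. G z / etheta_pm z u p) holomorphic_on - {0} \<inter> (\<lambda>z. etheta_pm z u p) -` (- {0})"
      using p u G(1) by (intro holomorphic_intros holomorphic_on_subset[OF G(1)]) auto
    moreover have "open (- {0} \<inter> (\<lambda>z. etheta_pm z u p) -` (- {0}))"
      using p u opn by (intro continuous_open_preimage holomorphic_on_imp_continuous_on) (auto intro!: holomorphic_intros)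
    ultimately have "isCont H z"
      using False \<open>z \<noteq> 0\<close> unfolding H(1)[abs_def]
      by (intro analytic_at_imp_isCont holomorphic_on_imp_analytic_at) auto
    then show ?thesis
      by (auto simp: isCont_def)
  qed
qed

lemma etheta_pm_addition_generic:
  fixes x y u v p :: complex
  assumes p: "norm p < 1" "p \<noteq> 0" and nz: "x \<noteq> 0" "y \<noteq> 0" "u \<noteq> 0" "v \<noteq> 0"
    and generic: "etheta (u * u) p \<noteq> 0" "etheta_pm y u p \<noteq> 0"
  shows "etheta_pm x y p * etheta_pm u v p - etheta_pm x v p * etheta_pm u y p
    = etheta_pm x u p * etheta_pm y v p"
proof -
  define G where "G z = etheta_pm z y p * etheta_pm u v p - etheta_pm z v p * etheta_pm u y p
    - etheta_pm z u p * etheta_pm y v p" for z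
  define D where "D z = etheta_pm z u p" for z
  have G_holo: "G holomorphic_on - {0}"
    unfolding G_def using p nz by (intro holomorphic_intros) auto
  have D_holo: "D holomorphic_on - {0}"
    unfolding D_def using p nz by (intro holomorphic_intros) auto
  have mult_p: "G (p * z) / D (p * z) = G z / D z" for z
  proof (cases "z = 0")
    case False
    then have "G (p * z) = G z / (p * z ^ 2)" "D (p * z) = D z / (p * z ^ 2)"
      using nz by (simp_all add: G_def D_def etheta_pm_mult_p[OF p False] diff_divide_distrib)
    then show ?thesis
      using False p(2) by simp
  qed simp
  have inverse: "G (1 / z) / D (1 / z) = G z / D z" for z
    using etheta_pm_inverse[OF p(1), of z] nz by (cases "z = 0") (simp_all add: G_def D_def)
  have "G u = 0" "G y = 0"
    using etheta_pm_self[OF p(1)] etheta_pm_swap[OF p(1) nz(3,2)] by (simp_all add: G_def)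
  have "G z / D z = G z / etheta_pm z u p" for z
    by (simp add: D_def)
  then have "\<exists>L. ((\<lambda>z. G z / D z) \<longlongrightarrow> L) (at z)" if "z \<noteq> 0" for z
    using tendsto_etheta_pm_quotient[of p u G "\<lambda>z. G z / D z"] p nz(3) generic(1) G_holo
      \<open>G u = 0\<close> mult_p inverse that by blast
  moreover have "D y \<noteq> 0"
    using generic(2) by (simp add: D_def)
  ultimately have "G x = 0"
    using mult_periodic_quotient_eq_0[OF p G_holo D_holo mult_p] nz(1,2) \<open>G y = 0\<close> by blast
  then show ?thesis
    by (simp add: G_def)
qed

lemma holomorphic_common_nonzero:
  fixes f g :: "complex \<Rightarrow> complex"
  assumes "open S" "connected S" "f holomorphic_on S" "g holomorphic_on S"
    and "a \<in> S" "f a \<noteq> 0" "b \<in> S" "g b \<noteq> 0"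
  shows "\<exists>c\<in>S. f c \<noteq> 0 \<and> g c \<noteq> 0"
proof (rule ccontr)
  assume vanish: "\<not> (\<exists>c\<in>S. f c \<noteq> 0 \<and> g c \<noteq> 0)"
  define U where "U = S \<inter> f -` (- {0})"
  have "open U"
    unfolding U_def using assms(1) holomorphic_on_imp_continuous_on[OF assms(3)]
    by (intro continuous_open_preimage) auto
  moreover have "U \<noteq> {}" "U \<subseteq> S"
    using assms(5,6) by (auto simp: U_def)
  moreover have "g z = 0" if "z \<in> U" for z
    using that vanish by (auto simp: U_def)
  ultimately have "g b = (\<lambda>_. 0) b"
    using analytic_continuation_open[OF _ assms(1) _ assms(2) _ assms(4) holomorphic_on_const] assms(7)
    by blast
  with assms(8) show False
    by simp
qed

lemma etheta_pm_generic_point: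
  fixes y p :: complex
  assumes p: "norm p < 1" and "y \<noteq> 0"
  shows "\<exists>w\<in>- {0}. etheta (w * w) p \<noteq> 0 \<and> etheta_pm y w p \<noteq> 0"
proof -
  have opn: "open (- {0 :: complex})" and conn: "connected (- {0 :: complex})"
    by (auto intro: connected_punctured_universe)
  have "(\<lambda>w. etheta (y * w) p) holomorphic_on - {0}" "(\<lambda>w. etheta (y / w) p) holomorphic_on - {0}"
    using p assms(2) by (auto intro!: holomorphic_intros)
  then have "\<exists>c\<in>- {0}. etheta (y * c) p \<noteq> 0 \<and> etheta (y / c) p \<noteq> 0"
    by (rule holomorphic_common_nonzero[OF opn conn, where a = "- 1 / y" and b = "- y"])
      (use etheta_minus_1_nonzero[OF p] assms(2) in simp_all)
  then obtain c where c: "c \<in> - {0}" "etheta_pm y c p \<noteq> 0"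
    using assms(2) by (auto simp: etheta_pm_def)
  have "(\<lambda>w. etheta (w * w) p) holomorphic_on - {0}" "(\<lambda>w. etheta_pm y w p) holomorphic_on - {0}"
    using p assms(2) by (auto intro!: holomorphic_intros)
  then show ?thesis
    by (rule holomorphic_common_nonzero[OF opn conn, where a = \<i> and b = c])
      (use etheta_minus_1_nonzero[OF p] c in simp_all)
qed

lemma etheta_pm_addition:
  fixes x y u v p :: complex
  assumes p: "norm p < 1" and nz: "x \<noteq> 0" "y \<noteq> 0" "u \<noteq> 0" "v \<noteq> 0"
  shows "etheta_pm x y p * etheta_pm u v p - etheta_pm x v p * etheta_pm u y p
    = etheta_pm x u p * etheta_pm y v p"
proof (cases "p = 0")
  case True
  then show ?thesis
    using nz by (simp add: etheta_pm_nome_0 field_simps)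
next
  case False
  (* Both sides are holomorphic in \<open>u\<close>, and the generic case covers a nonempty open set of \<open>u\<close>. *)
  define K where "K w = etheta_pm x y p * etheta_pm w v p - etheta_pm x v p * etheta_pm w y p
    - etheta_pm x w p * etheta_pm y v p" for w
  define T where "T = - {0} \<inter> (\<lambda>w. etheta (w * w) p * etheta_pm y w p) -` (- {0})"
  have opn: "open (- {0 :: complex})" and conn: "connected (- {0 :: complex})"
    by (auto intro: connected_punctured_universe)
  have "K holomorphic_on - {0}"
    unfolding K_def using p nz by (intro holomorphic_intros) auto
  moreover have "open T"
    unfolding T_def using p nz(2) opn
    by (intro continuous_open_preimage holomorphic_on_imp_continuous_on) (auto intro!: holomorphic_intros)
  moreover have "T \<noteq> {}" "T \<subseteq> - {0}"
    using etheta_pm_generic_point[OF p nz(2)] by (auto simp: T_def)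
  moreover have "K w = 0" if "w \<in> T" for w
    using that etheta_pm_addition_generic[OF p False nz(1,2) _ nz(4)] by (auto simp: K_def T_def)
  ultimately have "K u = (\<lambda>_. 0) u"
    using analytic_continuation_open[OF _ opn _ conn _ _ holomorphic_on_const] nz(3) by blast
  then show ?thesis
    by (simp add: K_def)
qed

section \<open>Elliptic partial fractions\<close>

lemma etheta_pm_expand:
  fixes z c x y p :: complex
  assumes "norm p < 1" "z \<noteq> 0" "c \<noteq> 0" "x \<noteq> 0" "y \<noteq> 0" "etheta_pm x y p \<noteq> 0"
  shows "etheta_pm z c p
    = etheta_pm c y p / etheta_pm x y p * etheta_pm z x p + etheta_pm x c p / etheta_pm x y p * etheta_pm z y p"
proof -
  have "etheta_pm z c p * etheta_pm x y p = etheta_pm z x p * etheta_pm c y p + etheta_pm z y p * etheta_pm x c p"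
    using etheta_pm_addition[OF assms(1-5)] by (simp add: algebra_simps)
  then show ?thesis
    using assms(6) by (simp add: field_simps)
qed

definition pf_term :: "complex \<Rightarrow> ('a \<Rightarrow> complex) \<Rightarrow> (nat \<Rightarrow> complex) \<Rightarrow> nat \<Rightarrow> 'a set \<Rightarrow> 'a \<Rightarrow> complex"
  where "pf_term p x c N I k
    = (\<Prod>j<N. etheta_pm (x k) (c j) p) / (\<Prod>m\<in>I - {k}. etheta_pm (x k) (x m) p)"

lemma pf_term_Suc: "pf_term p x c (Suc N) I k = etheta_pm (x k) (c N) p * pf_term p x c N I k"
  by (simp add: pf_term_def)

lemma pf_term_remove:
  assumes "norm p < 1" "finite I" "a \<in> I" "k \<in> I" "k \<noteq> a \<Longrightarrow> etheta_pm (x k) (x a) p \<noteq> 0"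
  shows "etheta_pm (x k) (x a) p * pf_term p x c N I k
    = (if k = a then 0 else pf_term p x c N (I - {a}) k)"
proof (cases "k = a")
  case False
  then have "I - {k} = insert a (I - {a} - {k})"
    using assms(3) by auto
  then show ?thesis
    using assms(2,5) False by (simp add: pf_term_def)
qed (simp add: etheta_pm_self[OF assms(1)])

lemma sum_pf_term_eq_0:
  fixes x :: "'a \<Rightarrow> complex" and c :: "nat \<Rightarrow> complex" and p :: complex
  assumes p: "norm p < 1"
    and I: "finite I" "card I = N + 2"
    and x: "\<And>k. k \<in> I \<Longrightarrow> x k \<noteq> 0" and c: "\<And>j. j < N \<Longrightarrow> c j \<noteq> 0"
    and distinct: "\<And>k m. k \<in> I \<Longrightarrow> m \<in> I \<Longrightarrow> k \<noteq> m \<Longrightarrow> etheta_pm (x k) (x m) p \<noteq> 0"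
  shows "(\<Sum>k\<in>I. pf_term p x c N I k) = 0"
  using I x c distinct
proof (induction N arbitrary: I)
  case 0
  then obtain \<alpha> \<beta> where I: "I = {\<alpha>, \<beta>}" "\<alpha> \<noteq> \<beta>"
    by (auto simp: card_Suc_eq)
  have "etheta_pm (x \<beta>) (x \<alpha>) p = - etheta_pm (x \<alpha>) (x \<beta>) p"
    using "0.prems"(3) I by (intro etheta_pm_swap[OF p]) auto
  with I show ?case
    by (simp add: pf_term_def insert_Diff_if)
next
  case (Suc N)
  (* Expanding \<open>\<phi>(x\<^sub>k,c\<^sub>N)\<close> by the addition formula in terms of \<open>\<phi>(x\<^sub>k,x\<^sub>\<alpha>)\<close> and \<open>\<phi>(x\<^sub>k,x\<^sub>\<beta>)\<close>
     cancels one factor of each term's denominator and leaves sums over \<open>I - {\<alpha>}\<close> and \<open>I - {\<beta>}\<close>. *)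
  obtain \<alpha> \<beta> where \<alpha>\<beta>: "\<alpha> \<in> I" "\<beta> \<in> I" "\<alpha> \<noteq> \<beta>"
    using Suc.prems(2) by (auto simp: card_Suc_eq)
  define A where "A = etheta_pm (x \<alpha>) (c N) p / etheta_pm (x \<alpha>) (x \<beta>) p"
  define B where "B = etheta_pm (c N) (x \<beta>) p / etheta_pm (x \<alpha>) (x \<beta>) p"
  have "pf_term p x c (Suc N) I k
      = B * (if k = \<alpha> then 0 else pf_term p x c N (I - {\<alpha>}) k)
      + A * (if k = \<beta> then 0 else pf_term p x c N (I - {\<beta>}) k)" if k: "k \<in> I" for k
  proof -
    have "etheta_pm (x k) (c N) p = B * etheta_pm (x k) (x \<alpha>) p + A * etheta_pm (x k) (x \<beta>) p"
      unfolding A_def B_def using Suc.prems(3-5) k \<alpha>\<beta> by (intro etheta_pm_expand[OF p]) auto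
    then have "pf_term p x c (Suc N) I k
        = B * (etheta_pm (x k) (x \<alpha>) p * pf_term p x c N I k)
        + A * (etheta_pm (x k) (x \<beta>) p * pf_term p x c N I k)"
      by (simp add: pf_term_Suc algebra_simps)
    also have "\<dots> = B * (if k = \<alpha> then 0 else pf_term p x c N (I - {\<alpha>}) k)
        + A * (if k = \<beta> then 0 else pf_term p x c N (I - {\<beta>}) k)"
      using pf_term_remove[OF p Suc.prems(1) \<alpha>\<beta>(1) k Suc.prems(5)[OF k \<alpha>\<beta>(1)], of c N]
        pf_term_remove[OF p Suc.prems(1) \<alpha>\<beta>(2) k Suc.prems(5)[OF k \<alpha>\<beta>(2)], of c N]
      by simp
    finally show ?thesis .
  qed
  then have "(\<Sum>k\<in>I. pf_term p x c (Suc N) I k)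
      = B * (\<Sum>k\<in>I - {\<alpha>}. pf_term p x c N (I - {\<alpha>}) k) + A * (\<Sum>k\<in>I - {\<beta>}. pf_term p x c N (I - {\<beta>}) k)"
    using Suc.prems(1) \<alpha>\<beta> by (simp add: sum.distrib sum.delta_remove flip: sum_distrib_left)
  also have "\<dots> = 0"
  proof -
    have "(\<Sum>k\<in>I - {a}. pf_term p x c N (I - {a}) k) = 0" if "a \<in> I" for a
      using Suc.prems that by (intro Suc.IH) auto
    then show ?thesis
      using \<alpha>\<beta> by simp
  qed
  finally show ?case .
qed

section \<open>Geometric nodes\<close>

lemma epoch_of_nat: "epoch a q p (int m) = (\<Prod>k<m. etheta (a * q ^ k) p)"
  by (simp add: epoch_def)

lemma prod_power_Suc: "(\<Prod>i<d. q ^ Suc i) = (q :: 'a :: comm_monoid_mult) ^ (Suc d choose 2)"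
proof (induction d)
  case (Suc d)
  have "Suc (Suc d) choose 2 = Suc d + (Suc d choose 2)"
    by (simp add: numeral_2_eq_2)
  with Suc show ?case
    by (simp add: power_add ac_simps)
qed (simp add: numeral_2_eq_2)

lemma choose_2_add:
  fixes k d :: nat
  shows "(Suc d choose 2) + k * (k + d) = (Suc (k + d) choose 2) + (k choose 2)"
proof -
  have Suc_choose: "Suc m choose 2 = m + (m choose 2)" for m :: nat
    by (simp add: numeral_2_eq_2)
  have "k * k = k + 2 * (k choose 2)"
    by (induction k) (simp_all add: Suc_choose algebra_simps)
  then show ?thesis
    by (induction d) (simp_all add: Suc_choose algebra_simps)
qed

lemma etheta_power_ratio:
  fixes q p :: complex
  assumes "norm p < 1" "q \<noteq> 0"
  shows "m < k \<Longrightarrow> etheta (q ^ k / q ^ m) p = etheta (q * q ^ (k - Suc m)) p"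
    and "k < m \<Longrightarrow> etheta (q ^ k / q ^ m) p = - etheta (q * q ^ (m - Suc k)) p / q ^ Suc (m - Suc k)"
proof -
  assume "m < k"
  then have "q ^ k = q ^ m * (q * q ^ (k - Suc m))"
    by (simp flip: power_add power_Suc)
  then show "etheta (q ^ k / q ^ m) p = etheta (q * q ^ (k - Suc m)) p"
    using assms(2) by simp
next
  assume "k < m"
  then have "q ^ m = q ^ k * (q * q ^ (m - Suc k))"
    by (simp flip: power_add power_Suc)
  then have "q ^ k / q ^ m = 1 / (q * q ^ (m - Suc k))"
    using assms(2) by simp
  then show "etheta (q ^ k / q ^ m) p = - etheta (q * q ^ (m - Suc k)) p / q ^ Suc (m - Suc k)"
    using etheta_inverse[OF assms(1), of "q * q ^ (m - Suc k)"] assms(2) by simp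
qed

lemma prod_etheta_power_ratio:
  fixes q p :: complex
  assumes "norm p < 1" "q \<noteq> 0" "k \<le> n"
  shows "(\<Prod>m\<in>{..n} - {k}. etheta (q ^ k / q ^ m) p)
    = (-1) ^ n * (-1) ^ k * epoch q q p (int k) * epoch q q p (int (n - k)) / q ^ (Suc (n - k) choose 2)"
proof -
  have split: "{..n} - {k} = {..<k} \<union> {Suc k..n}"
    using assms(3) by auto
  have "(\<Prod>m\<in>{..n} - {k}. etheta (q ^ k / q ^ m) p)
      = (\<Prod>m<k. etheta (q ^ k / q ^ m) p) * (\<Prod>m\<in>{Suc k..n}. etheta (q ^ k / q ^ m) p)"
    unfolding split by (rule prod.union_disjoint) auto
  also have "(\<Prod>m<k. etheta (q ^ k / q ^ m) p) = epoch q q p (int k)"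
    unfolding epoch_of_nat
    by (rule prod.reindex_bij_witness[where i = "\<lambda>i. k - Suc i" and j = "\<lambda>m. k - Suc m"])
       (auto simp: etheta_power_ratio(1)[OF assms(1,2)])
  also have "(\<Prod>m\<in>{Suc k..n}. etheta (q ^ k / q ^ m) p)
      = (\<Prod>i<n - k. - etheta (q * q ^ i) p / q ^ Suc i)"
    by (rule prod.reindex_bij_witness[where i = "\<lambda>i. Suc k + i" and j = "\<lambda>m. m - Suc k"])
       (auto simp: etheta_power_ratio(2)[OF assms(1,2)])
  also have "\<dots> = (\<Prod>i<n - k. (-1) * (etheta (q * q ^ i) p / q ^ Suc i))"
    by simp
  also have "\<dots> = (-1) ^ (n - k) * ((\<Prod>i<n - k. etheta (q * q ^ i) p) / (\<Prod>i<n - k. q ^ Suc i))"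
    by (simp only: prod.distrib prod_dividef prod_constant card_lessThan)
  also have "\<dots> = (-1) ^ (n - k) * epoch q q p (int (n - k)) / q ^ (Suc (n - k) choose 2)"
    by (simp only: epoch_of_nat prod_power_Suc times_divide_eq_right)
  also have "(-1 :: complex) ^ (n - k) = (-1) ^ n * (-1) ^ k"
    using assms(3) by (simp flip: neg_one_power_add_eq_neg_one_power_diff power_add)
  finally show ?thesis
    by simp
qed

lemma prod_etheta_shifted_power:
  assumes "k \<le> n"
  shows "(\<Prod>m\<in>{..n} - {k}. etheta (c * q ^ m) p) * etheta (c * q ^ k) p = epoch c q p (int n + 1)"
proof -
  have "epoch c q p (int n + 1) = (\<Prod>m\<le>n. etheta (c * q ^ m) p)"
    using epoch_of_nat[of c q p "Suc n"] by (simp add: lessThan_Suc_atMost add.commute)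
  also have "\<dots> = etheta (c * q ^ k) p * (\<Prod>m\<in>{..n} - {k}. etheta (c * q ^ m) p)"
    using assms by (intro prod.remove) auto
  finally show ?thesis
    by (simp add: mult.commute)
qed

lemma etheta_pm_node_param:
  fixes a b q r s p :: complex
  assumes "norm p < 1" "a \<noteq> 0" "b \<noteq> 0" "q \<noteq> 0" "r \<noteq> 0" "s * s = a / b"
  shows "etheta_pm (s * q ^ k) (a * r ^ j / s) p
    = - 1 / (b * r ^ j * s) * (etheta (a * q ^ k * r ^ j) p * etheta (b / q ^ k * r ^ j) p)"
proof -
  have "s \<noteq> 0"
    using assms(2,3,6) by auto
  have prod: "s * q ^ k * (a * r ^ j / s) = a * q ^ k * r ^ j"
    using \<open>s \<noteq> 0\<close> by simp
  have "s * q ^ k / (a * r ^ j / s) = (s * s) * q ^ k / (a * r ^ j)"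
    using \<open>s \<noteq> 0\<close> by simp
  also have "\<dots> = 1 / (b / q ^ k * r ^ j)"
    unfolding assms(6) using assms(2-5) by (simp add: field_simps)
  finally have quot: "s * q ^ k / (a * r ^ j / s) = 1 / (b / q ^ k * r ^ j)" .
  have inv: "etheta (1 / (b / q ^ k * r ^ j)) p = - etheta (b / q ^ k * r ^ j) p / (b / q ^ k * r ^ j)"
    using assms(3-5) by (intro etheta_inverse[OF assms(1)]) simp
  show ?thesis
    unfolding etheta_pm_def prod quot inv using assms(3-5) \<open>s \<noteq> 0\<close> by (simp add: field_simps)
qed

lemma etheta_pm_nodes:
  fixes a b q s p :: complex
  assumes "s \<noteq> 0" "s * s = a / b"
  shows "etheta_pm (s * q ^ k) (s * q ^ m) p
    = etheta (a * q ^ k / b * q ^ m) p * etheta (q ^ k / q ^ m) p / (s * q ^ k)"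
proof -
  have "s * q ^ k * (s * q ^ m) = (s * s) * q ^ k * q ^ m"
    by (simp add: ac_simps)
  then have "s * q ^ k * (s * q ^ m) = a * q ^ k / b * q ^ m"
    unfolding assms(2) by simp
  moreover have "s * q ^ k / (s * q ^ m) = q ^ k / q ^ m"
    using assms(1) by simp
  ultimately show ?thesis
    unfolding etheta_pm_def by simp
qed

definition theta_sum_term :: "complex \<Rightarrow> complex \<Rightarrow> complex \<Rightarrow> complex \<Rightarrow> complex \<Rightarrow> nat \<Rightarrow> nat \<Rightarrow> complex"
  where "theta_sum_term a b q r p n k =
    epoch (a * q ^ k) r p (int n - 1) * epoch (b / q ^ k) r p (int n - 1) * etheta (a * q ^ (2 * k) / b) p
    / (epoch q q p (int k) * epoch q q p (int (n - k)) * epoch (a * q ^ k / b) q p (int n + 1))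
    * (-1) ^ k * q ^ (k choose 2)"

lemma etheta_pm_nodes_nonzero:
  fixes a b q s p :: complex
  assumes p: "norm p < 1" and "q \<noteq> 0" "s \<noteq> 0" "s * s = a / b" and km: "k \<le> n" "m \<le> n" "k \<noteq> m"
    and Q: "epoch q q p (int n) \<noteq> 0" and A: "epoch (a * q ^ k / b) q p (int n + 1) \<noteq> 0"
  shows "etheta_pm (s * q ^ k) (s * q ^ m) p \<noteq> 0"
proof -
  have "epoch (a * q ^ k / b) q p (int (Suc n)) \<noteq> 0"
    using A by (simp add: add.commute)
  then have "(\<Prod>i<Suc n. etheta (a * q ^ k / b * q ^ i) p) \<noteq> 0"
    by (simp only: epoch_of_nat not_False_eq_True)
  then have "etheta (a * q ^ k / b * q ^ m) p \<noteq> 0"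
    using km(2) by (subst (asm) prod_zero_iff) auto
  moreover have "etheta (q * q ^ i) p \<noteq> 0" if "i < n" for i
    using Q that by (simp add: epoch_of_nat)
  then have "etheta (q ^ k / q ^ m) p \<noteq> 0"
    using km assms(2) by (cases "m < k") (simp_all add: etheta_power_ratio[OF p assms(2)])
  ultimately show ?thesis
    using assms(2,3) by (simp add: etheta_pm_nodes[OF assms(3,4)])
qed

lemma prod_etheta_pm_nodes:
  fixes a b q s p :: complex
  assumes p: "norm p < 1" and "q \<noteq> 0" "s \<noteq> 0" "s * s = a / b" and k: "k \<le> n"
    and T: "etheta (a * q ^ (2 * k) / b) p \<noteq> 0"
  shows "(\<Prod>m\<in>{..n} - {k}. etheta_pm (s * q ^ k) (s * q ^ m) p)
    = epoch (a * q ^ k / b) q p (int n + 1) / etheta (a * q ^ (2 * k) / b) p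
      * ((-1) ^ n * (-1) ^ k * epoch q q p (int k) * epoch q q p (int (n - k)) / q ^ (Suc (n - k) choose 2))
      / (s ^ n * (q ^ k) ^ n)"
proof -
  have "(\<Prod>m\<in>{..n} - {k}. etheta (a * q ^ k / b * q ^ m) p) * etheta (a * q ^ (2 * k) / b) p
      = epoch (a * q ^ k / b) q p (int n + 1)"
    using prod_etheta_shifted_power[OF k, of "a * q ^ k / b" q p] by (simp add: mult_2 power_add mult.assoc)
  then have shifted: "(\<Prod>m\<in>{..n} - {k}. etheta (a * q ^ k / b * q ^ m) p)
      = epoch (a * q ^ k / b) q p (int n + 1) / etheta (a * q ^ (2 * k) / b) p"
    using T by (simp add: eq_divide_eq)
  have "card ({..n} - {k}) = n"
    using k by simp
  then show ?thesis
    unfolding etheta_pm_nodes[OF assms(3,4)] prod_dividef prod.distrib prod_constant shifted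
      prod_etheta_power_ratio[OF p assms(2) k] power_mult_distrib
    by simp
qed

lemma pf_term_geometric:
  fixes a b q r s p :: complex
  assumes p: "norm p < 1" and nz: "a \<noteq> 0" "b \<noteq> 0" "q \<noteq> 0" "r \<noteq> 0" and s: "s * s = a / b"
    and k: "k \<le> n" and n: "n = Suc N"
    and Q: "epoch q q p (int k) \<noteq> 0" "epoch q q p (int (n - k)) \<noteq> 0"
    and A: "epoch (a * q ^ k / b) q p (int n + 1) \<noteq> 0"
  shows "pf_term p (\<lambda>k. s * q ^ k) (\<lambda>j. a * r ^ j / s) N {..n} k
    = (\<Prod>j<N. - 1 / (b * r ^ j * s)) * s ^ n * q ^ (Suc n choose 2) * (-1) ^ n
      * theta_sum_term a b q r p n k"
proof -
  have "s \<noteq> 0"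
    using nz(1,2) s by auto
  define C where "C = (\<Prod>j<N. - 1 / (b * r ^ j * s))"
  define R where "R = epoch (a * q ^ k) r p (int n - 1) * epoch (b / q ^ k) r p (int n - 1)"
  define T where "T = etheta (a * q ^ (2 * k) / b) p"
  define \<sigma> :: complex where "\<sigma> = (-1) ^ n * (-1) ^ k"
  have "int n - 1 = int N"
    using n by simp
  then have num: "(\<Prod>j<N. etheta_pm (s * q ^ k) (a * r ^ j / s) p) = C * R"
    by (simp only: C_def R_def etheta_pm_node_param[OF p nz s] prod.distrib epoch_of_nat)
  have "T \<noteq> 0"
    using A prod_etheta_shifted_power[OF k, of "a * q ^ k / b" q p]
    by (auto simp: T_def mult_2 power_add mult.assoc)
  note den = prod_etheta_pm_nodes[OF p nz(3) \<open>s \<noteq> 0\<close> s k \<open>T \<noteq> 0\<close>[unfolded T_def], folded \<sigma>_def T_def]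
  have exponent: "q ^ (Suc (n - k) choose 2) * (q ^ k) ^ n = q ^ (Suc n choose 2) * q ^ (k choose 2)"
    using choose_2_add[of "n - k" k] k by (simp flip: power_add power_mult)
  have "\<sigma> * \<sigma> = 1"
    by (simp add: \<sigma>_def power_mult_distrib flip: power_add)
  then have "\<sigma> \<noteq> 0"
    by auto
  have "C * R / (epoch (a * q ^ k / b) q p (int n + 1) / T
        * (\<sigma> * epoch q q p (int k) * epoch q q p (int (n - k)) / q ^ (Suc (n - k) choose 2))
        / (s ^ n * (q ^ k) ^ n))
      = C * R * T * s ^ n * (q ^ (Suc (n - k) choose 2) * (q ^ k) ^ n)
        / (epoch (a * q ^ k / b) q p (int n + 1) * epoch q q p (int k) * epoch q q p (int (n - k)) * \<sigma>)"
    using nz(3) \<open>s \<noteq> 0\<close> \<open>T \<noteq> 0\<close> \<open>\<sigma> \<noteq> 0\<close> Q A by (simp add: field_simps)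
  also have "\<dots> = C * R * T * s ^ n * (q ^ (Suc n choose 2) * q ^ (k choose 2)) * (\<sigma> * \<sigma>)
        / (epoch (a * q ^ k / b) q p (int n + 1) * epoch q q p (int k) * epoch q q p (int (n - k)) * \<sigma>)"
    unfolding exponent \<open>\<sigma> * \<sigma> = 1\<close> by simp
  also have "\<dots> = C * s ^ n * q ^ (Suc n choose 2) * (-1) ^ n
      * (R * T / (epoch q q p (int k) * epoch q q p (int (n - k)) * epoch (a * q ^ k / b) q p (int n + 1))
        * (-1) ^ k * q ^ (k choose 2))"
    using \<open>\<sigma> \<noteq> 0\<close> Q A by (simp add: \<sigma>_def field_simps)
  finally show ?thesis
    unfolding pf_term_def num den theta_sum_term_def R_def T_def C_def .
qed

lemma theta_sum_term_0:
  "theta_sum_term a b q r p 0 0 = etheta (a / b) p / (etheta (a / r) p * etheta (b / r) p * etheta (a / b) p)"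
  by (simp add: theta_sum_term_def epoch_def power_int_minus divide_inverse numeral_2_eq_2)

lemma sum_theta_sum_term_eq_0:
  fixes a b q r p :: complex
  assumes p: "norm p < 1" and nz: "a \<noteq> 0" "b \<noteq> 0" "q \<noteq> 0" "r \<noteq> 0" and "n \<noteq> 0"
    and Q: "\<And>k. k \<le> n \<Longrightarrow> epoch q q p (int k) \<noteq> 0"
    and A: "\<And>k. k \<le> n \<Longrightarrow> epoch (a * q ^ k / b) q p (int n + 1) \<noteq> 0"
  shows "(\<Sum>k\<le>n. theta_sum_term a b q r p n k) = 0"
proof -
  obtain N where n: "n = Suc N"
    using \<open>n \<noteq> 0\<close> not0_implies_Suc by blast
  define s where "s = csqrt (a / b)"
  have s: "s * s = a / b"
    unfolding s_def using power2_csqrt[of "a / b"] by (simp add: power2_eq_square)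
  then have "s \<noteq> 0"
    using nz by auto
  define C where "C = (\<Prod>j<N. - 1 / (b * r ^ j * s)) * s ^ n * q ^ (Suc n choose 2) * (-1) ^ n"
  have "C \<noteq> 0"
    using nz \<open>s \<noteq> 0\<close> by (simp add: C_def)
  have "(\<Sum>k\<le>n. pf_term p (\<lambda>k. s * q ^ k) (\<lambda>j. a * r ^ j / s) N {..n} k) = 0"
    using nz \<open>s \<noteq> 0\<close> n Q A
    by (intro sum_pf_term_eq_0[OF p] etheta_pm_nodes_nonzero[OF p nz(3) \<open>s \<noteq> 0\<close> s]) auto
  also have "(\<Sum>k\<le>n. pf_term p (\<lambda>k. s * q ^ k) (\<lambda>j. a * r ^ j / s) N {..n} k)
      = (\<Sum>k\<le>n. C * theta_sum_term a b q r p n k)"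
  proof (rule sum.cong[OF refl])
    fix k
    assume "k \<in> {..n}"
    then have k: "k \<le> n"
      by simp
    show "pf_term p (\<lambda>k. s * q ^ k) (\<lambda>j. a * r ^ j / s) N {..n} k = C * theta_sum_term a b q r p n k"
      unfolding C_def by (rule pf_term_geometric[OF p nz s k n Q[OF k] Q[OF diff_le_self] A[OF k]])
  qed
  finally show ?thesis
    using \<open>C \<noteq> 0\<close> by (simp flip: sum_distrib_left)
qed

theorem mainTheorem9:
  fixes a b q r p :: complex and n :: nat
  assumes "norm p < 1"
    and "a \<noteq> 0" and "b \<noteq> 0" and "q \<noteq> 0" and "r \<noteq> 0"
    and "\<And>k. k \<le> n \<Longrightarrow> epoch q q p (int k) \<noteq> 0"
    and "\<And>k. k \<le> n \<Longrightarrow> epoch (a * q ^ k / b) q p (int n + 1) \<noteq> 0"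
    and "n = 0 \<Longrightarrow> etheta (a / r) p \<noteq> 0 \<and> etheta (b / r) p \<noteq> 0"
  shows "etheta (a / r) p * etheta (b / r) p *
    (\<Sum>k\<le>n. epoch (a * q ^ k) r p (int n - 1) * epoch (b / q ^ k) r p (int n - 1)
              * etheta (a * q ^ (2 * k) / b) p
            / (epoch q q p (int k) * epoch q q p (int (n - k)) * epoch (a * q ^ k / b) q p (int n + 1))
            * (-1) ^ k * q ^ (k choose 2))
    = (if n = 0 then 1 else 0)"
proof -
  have "etheta (a / r) p * etheta (b / r) p * (\<Sum>k\<le>n. theta_sum_term a b q r p n k)
    = (if n = 0 then 1 else 0)"
  proof (cases "n = 0")
    case True
    have "etheta (a / b) p \<noteq> 0"
      using assms(7)[of 0] True by (simp add: epoch_def)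
    then show ?thesis
      using True assms(8) by (simp add: theta_sum_term_0)
  next
    case False
    then show ?thesis
      using sum_theta_sum_term_eq_0[OF assms(1-5) False assms(6,7)] by simp
  qed
  then show ?thesis
    by (simp add: theta_sum_term_def)
qed

end
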